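(* Let $X$ be a multitype Galton–Watson tree with offspring kernel $\mathbb Q$ on a finite alphabet $\mathcal X$. Assume that $(\tilde L_X,M_X)$, conditioned on $\{|T|=n\}$, satisfies a large deviation principle (as $n\to\infty$, speed $n$) in $\mathcal M_s$ with the convex, good rate function $$\widetilde J(\varpi,\nu)=\begin{cases}H(\nu\,\|\,\nu_1\otimes\mathbb Q)&\text{if }\varpi_2=\nu_1,\\ \infty&\text{otherwise.}\end{cases}$$ Then $(\tilde L_X,M_X)$ conditioned on $\{|T|=n\}$ satisfies the large deviation principle in $\tilde{\mathcal M}(\mathcal X\times\mathcal X)\times\mathcal M(\mathcal X\times\mathcal X^* )$ with the convex, good rate function $J(\varpi,\nu)=H(\nu\,\|\,\nu_1\otimes\mathbb Q)$ if $(\varpi,\nu)$ is sub-consistent and $\varpi_2=\nu_1$, and $J(\varpi,\nu)=\infty$ otherwise.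
   Context: $\mathcal X^*=\bigcup_{n\ge0}\{n\}\times\mathcal X^n$, elements $c=(n,a_1,\dots,a_n)$, $m(a,c)=\sum_{i}\mathbf 1\{a_i=a\}$. The multitype Galton–Watson tree: root type from an initial law $\mu$; each vertex $v$ of type $a$ independently has children number and types $C(v)=(N(v),X_1(v),\dots,X_{N(v)}(v))\sim\mathbb Q\{\cdot\mid a\}$. $M_X(a,c)=\frac1{|T|}\sum_v\delta_{(X(v),C(v))}(a,c)$; $\tilde L_X(a,b)=\frac1{|T|}\sum_{e\in E}\delta_{(X(e_1),X(e_2))}(a,b)$ (edges oriented away from the root, $e_1$ parent, $e_2$ child). $\tilde{\mathcal M}(\mathcal X\times\mathcal X)$: finite measures; $\mathcal M(\mathcal X\times\mathcal X^* )$: probability measures $\nu$ with $\int n\,d\nu<\infty$; weak topology. $(\varpi,\nu)$ is sub-consistent if $\varpi(a,b)\ge\sum_c m(b,c)\nu(a,c)$ for all $a,b$; $\mathcal M_s$ is the set of sub-consistent pairs, with the subspace topology. $\nu_1$: $\mathcal X$-marginal of $\nu$; $\varpi_2$: second marginal of $\varpi$; $\nu_1\otimes\mathbb Q(a,c)=\nu_1(a)\mathbb Q\{c\mid a\}$; $H$ relative entropy. *)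

theory Defs
  imports "HOL-Analysis.Analysis" "HOL-Library.Extended_Real" "HOL-Library.Extended_Nonnegative_Real"
begin

text \<open>An element c = (n,a_1,...,a_n) of X* is represented by the list [a_1,...,a_n].
A (finite) typed plane tree: a vertex of type a with an ordered list of subtrees.\<close>

datatype 'a ttree = TNode 'a "'a ttree list"

primrec troot :: "'a ttree \<Rightarrow> 'a" where
  "troot (TNode a ts) = a"

primrec tsize :: "'a ttree \<Rightarrow> nat" where
  "tsize (TNode a ts) = 1 + sum_list (map tsize ts)"

primrec vert_count :: "'a ttree \<Rightarrow> 'a \<times> 'a list \<Rightarrow> nat" where
  "vert_count (TNode a ts) p =
     (if p = (a, map troot ts) then 1 else 0) + sum_list (map (\<lambda>s. vert_count s p) ts)"

primrec edge_count :: "'a ttree \<Rightarrow> 'a \<times> 'a \<Rightarrow> nat" where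
  "edge_count (TNode a ts) p =
     (if fst p = a then count_list (map troot ts) (snd p) else 0)
     + sum_list (map (\<lambda>s. edge_count s p) ts)"

text \<open>Probability that the GW tree equals a given finite typed plane tree:
 mu(root type) times the product over vertices of Q{C(v) | X(v)}.\<close>
primrec kprob :: "('a \<Rightarrow> 'a list \<Rightarrow> real) \<Rightarrow> 'a ttree \<Rightarrow> real" where
  "kprob Q (TNode a ts) = Q a (map troot ts) * prod_list (map (kprob Q) ts)"

definition gw_prob :: "('a \<Rightarrow> real) \<Rightarrow> ('a \<Rightarrow> 'a list \<Rightarrow> real) \<Rightarrow> 'a ttree \<Rightarrow> real" where
  "gw_prob \<mu> Q t = \<mu> (troot t) * kprob Q t"

definition emp_pair :: "'a ttree \<Rightarrow> (('a \<times> 'a \<Rightarrow> real) \<times> ('a \<times> 'a list \<Rightarrow> real))" where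
  "emp_pair t = ((\<lambda>p. real (edge_count t p) / real (tsize t)),
                 (\<lambda>p. real (vert_count t p) / real (tsize t)))"

definition cond_prob :: "('a::finite \<Rightarrow> real) \<Rightarrow> ('a \<Rightarrow> 'a list \<Rightarrow> real) \<Rightarrow> nat
     \<Rightarrow> (('a \<times> 'a \<Rightarrow> real) \<times> ('a \<times> 'a list \<Rightarrow> real)) set \<Rightarrow> real" where
  "cond_prob \<mu> Q n A =
     (\<Sum>t\<in>{t. tsize t = n \<and> emp_pair t \<in> A}. gw_prob \<mu> Q t) / (\<Sum>t\<in>{t. tsize t = n}. gw_prob \<mu> Q t)"

text \<open>Measures on a countable discrete space are given by their mass functions.\<close>

definition fin_meas :: "('b \<Rightarrow> real) set" where
  "fin_meas = {m. (\<forall>x. 0 \<le> m x) \<and> m summable_on UNIV}"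

definition prob_meas :: "('b \<Rightarrow> real) set" where
  "prob_meas = {m. m \<in> fin_meas \<and> (\<Sum>\<^sub>\<infinity>x. m x) = 1}"

text \<open>M(X x X*): probability measures with finite mean number of children.\<close>
definition prob_meas_fm :: "('a \<times> 'a list \<Rightarrow> real) set" where
  "prob_meas_fm = {\<nu>. \<nu> \<in> prob_meas \<and> (\<lambda>p. real (length (snd p)) * \<nu> p) summable_on UNIV}"

text \<open>Weak topology on a set S of finite measures on a discrete countable space:
 the coarsest topology making m |-> integral of f dm continuous for every bounded
 (= bounded continuous, the space being discrete) test function f.\<close>
definition weak_top :: "('b \<Rightarrow> real) set \<Rightarrow> ('b \<Rightarrow> real) topology" where
  "weak_top S = topology_generated_by
     {{m \<in> S. (\<Sum>\<^sub>\<infinity>x. f x * m x) \<in> U} | f U. bounded (range f) \<and> open U}"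

definition space_top :: "(('a \<times> 'a \<Rightarrow> real) \<times> ('a \<times> 'a list \<Rightarrow> real)) topology" where
  "space_top = prod_topology (weak_top fin_meas) (weak_top prob_meas_fm)"

definition sub_consistent :: "('a \<times> 'a \<Rightarrow> real) \<Rightarrow> ('a \<times> 'a list \<Rightarrow> real) \<Rightarrow> bool" where
  "sub_consistent \<omega> \<nu> \<longleftrightarrow>
     (\<forall>a b. \<omega> (a, b) \<ge> (\<Sum>\<^sub>\<infinity>c. real (count_list c b) * \<nu> (a, c)))"

definition M_s :: "(('a \<times> 'a \<Rightarrow> real) \<times> ('a \<times> 'a list \<Rightarrow> real)) set" where
  "M_s = {p. p \<in> topspace space_top \<and> sub_consistent (fst p) (snd p)}"

definition marg1 :: "('a \<times> 'a list \<Rightarrow> real) \<Rightarrow> 'a \<Rightarrow> real" where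
  "marg1 \<nu> a = (\<Sum>\<^sub>\<infinity>c. \<nu> (a, c))"

definition marg2 :: "('a::finite \<times> 'a \<Rightarrow> real) \<Rightarrow> 'a \<Rightarrow> real" where
  "marg2 \<omega> b = (\<Sum>a\<in>UNIV. \<omega> (a, b))"

definition kernel_prod :: "('a \<Rightarrow> real) \<Rightarrow> ('a \<Rightarrow> 'a list \<Rightarrow> real) \<Rightarrow> 'a \<times> 'a list \<Rightarrow> real" where
  "kernel_prod m Q p = m (fst p) * Q (fst p) (snd p)"

text \<open>Relative entropy H(nu || rho) of finite measures on a discrete space:
 infinity unless nu << rho, otherwise sum_x [nu ln(nu/rho) - nu + rho] (with 0 ln 0 = 0),
 which is the usual sum_x nu ln(nu/rho) when nu and rho are probability measures.\<close>
definition rel_entropy :: "('b \<Rightarrow> real) \<Rightarrow> ('b \<Rightarrow> real) \<Rightarrow> ereal" where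
  "rel_entropy \<nu> \<rho> =
     (if \<exists>x. 0 < \<nu> x \<and> \<rho> x = 0 then \<infinity>
      else enn2ereal (\<integral>\<^sup>+ x. ennreal
        ((if \<nu> x = 0 then 0 else \<nu> x * ln (\<nu> x / \<rho> x)) - \<nu> x + \<rho> x) \<partial>count_space UNIV))"

definition ln_e :: "real \<Rightarrow> ereal" where
  "ln_e x = (if x \<le> 0 then -\<infinity> else ereal (ln x))"

definition rate_function :: "'x topology \<Rightarrow> ('x \<Rightarrow> ereal) \<Rightarrow> bool" where
  "rate_function T I \<longleftrightarrow> (\<forall>x\<in>topspace T. 0 \<le> I x) \<and>
     (\<forall>c::real. closedin T {x \<in> topspace T. I x \<le> ereal c})"

definition good_rate_function :: "'x topology \<Rightarrow> ('x \<Rightarrow> ereal) \<Rightarrow> bool" where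
  "good_rate_function T I \<longleftrightarrow> rate_function T I \<and>
     (\<forall>c::real. compactin T {x \<in> topspace T. I x \<le> ereal c})"

definition LDP :: "'x topology \<Rightarrow> (nat \<Rightarrow> 'x set \<Rightarrow> real) \<Rightarrow> ('x \<Rightarrow> ereal) \<Rightarrow> bool" where
  "LDP T P I \<longleftrightarrow> rate_function T I \<and>
     (\<forall>F. closedin T F \<longrightarrow>
        limsup (\<lambda>n. ereal (1 / real n) * ln_e (P n F)) \<le> - (INF x\<in>F. I x)) \<and>
     (\<forall>G. openin T G \<longrightarrow>
        - (INF x\<in>G. I x) \<le> liminf (\<lambda>n. ereal (1 / real n) * ln_e (P n G)))"

definition comb :: "real \<Rightarrow> (('a \<times> 'a \<Rightarrow> real) \<times> ('a \<times> 'a list \<Rightarrow> real))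
     \<Rightarrow> (('a \<times> 'a \<Rightarrow> real) \<times> ('a \<times> 'a list \<Rightarrow> real))
     \<Rightarrow> (('a \<times> 'a \<Rightarrow> real) \<times> ('a \<times> 'a list \<Rightarrow> real))" where
  "comb t p q = ((\<lambda>x. t * fst p x + (1 - t) * fst q x), (\<lambda>x. t * snd p x + (1 - t) * snd q x))"

definition convex_rate :: "(('a \<times> 'a \<Rightarrow> real) \<times> ('a \<times> 'a list \<Rightarrow> real)) set
     \<Rightarrow> ((('a \<times> 'a \<Rightarrow> real) \<times> ('a \<times> 'a list \<Rightarrow> real)) \<Rightarrow> ereal) \<Rightarrow> bool" where
  "convex_rate S I \<longleftrightarrow> (\<forall>p\<in>S. \<forall>q\<in>S. \<forall>t. 0 < t \<and> t < 1 \<longrightarrow>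
      I (comb t p q) \<le> ereal t * I p + ereal (1 - t) * I q)"

end

theory Submission
  imports Defs
begin

text \<open>The empirical pair of every tree is sub-consistent (with equality, as every non-root
vertex is counted once as a child), so each conditional law is carried by \<open>M_s\<close>. Extending
the rate function by \<open>\<infinity>\<close> off \<open>M_s\<close> leaves all infima over closed and open sets
unchanged, which transfers the two LDP bounds. Its sublevel sets are those of the
original rate function: compact in \<open>M_s\<close>, hence compact and, the weak topology being
Hausdorff, closed in the whole space. Convexity survives because \<open>M_s\<close> is convex.\<close>

lemma infsum_finite_support:
  fixes f :: "'b \<Rightarrow> real"
  assumes "finite V" and "\<And>x. x \<notin> V \<Longrightarrow> f x = 0"
  shows "(f has_sum sum f V) UNIV"
  using assms by (intro has_sum_finite_neutralI) simp_all

lemma topspace_weak_top [simp]: "topspace (weak_top S) = S"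
proof -
  have "S \<in> {{m \<in> S. (\<Sum>\<^sub>\<infinity>x. f x * m x) \<in> U} | f U. bounded (range f) \<and> open U}"
    by (rule CollectI, rule exI[of _ "\<lambda>_. 0"], rule exI[of _ UNIV]) auto
  then show ?thesis unfolding weak_top_def topology_generated_by_topspace by blast
qed

lemma continuous_map_weak_top_eval: "continuous_map (weak_top S) euclideanreal (\<lambda>m. m x)"
  unfolding continuous_map
proof (intro conjI allI impI)
  fix U :: "real set" assume "openin euclideanreal U"
  define f where "f = (\<lambda>y. if y = x then 1 else 0 :: real)"
  have "bounded (range f)"
    by (rule finite_imp_bounded, rule finite_subset[of _ "{0, 1}"]) (auto simp: f_def)
  moreover have "(\<Sum>\<^sub>\<infinity>y. f y * m y) = m x" for m :: "'a \<Rightarrow> real"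
  proof (rule infsumI)
    show "((\<lambda>y. f y * m y) has_sum m x) UNIV"
      using infsum_finite_support[of "{x}" "\<lambda>y. f y * m y"] by (simp add: f_def)
  qed
  ultimately have "{m \<in> S. m x \<in> U} \<in>
      {{m \<in> S. (\<Sum>\<^sub>\<infinity>x. f x * m x) \<in> U} | f U. bounded (range f) \<and> open U}"
    using \<open>openin euclideanreal U\<close> by (intro CollectI exI[of _ f] exI[of _ U]) simp
  then show "openin (weak_top S) {m \<in> topspace (weak_top S). m x \<in> U}"
    unfolding topspace_weak_top unfolding weak_top_def by (rule topology_generated_by_Basis)
qed simp

lemma Hausdorff_space_weak_top: "Hausdorff_space (weak_top S)"
proof (rule Hausdorff_space_injective_preimage)
  show "Hausdorff_space (product_topology (\<lambda>_. euclideanreal) UNIV)"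
    by (metis Hausdorff_space_euclidean Hausdorff_space_product_topology)
  show "continuous_map (weak_top S) (product_topology (\<lambda>_. euclideanreal) UNIV) id"
    unfolding continuous_map_componentwise_UNIV id_def by (rule allI continuous_map_weak_top_eval)+
qed (rule inj_on_id)

lemma Hausdorff_space_space_top: "Hausdorff_space space_top"
  unfolding space_top_def Hausdorff_space_prod_topology by (simp add: Hausdorff_space_weak_top)

lemma topspace_space_top: "topspace space_top = fin_meas \<times> prob_meas_fm"
  unfolding space_top_def by simp

lemma sum_sum_list_swap:
  "(\<Sum>p\<in>S. sum_list (map (\<lambda>s. f s p) ts)) = sum_list (map (\<lambda>s. \<Sum>p\<in>S. f s p) ts)"
  by (induction ts) (auto simp: sum.distrib)

lemma vert_count_subtree_nonzero:
  assumes "s \<in> set ts" and "vert_count s p \<noteq> 0"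
  shows "vert_count (TNode a ts) p \<noteq> 0"
  using assms by (auto simp: sum_list_eq_0_iff)

lemma finite_vert_count_support: "finite {p. vert_count t p \<noteq> 0}"
proof (induction t)
  case (TNode a ts)
  have "{p. vert_count (TNode a ts) p \<noteq> 0} \<subseteq>
      insert (a, map troot ts) (\<Union>s\<in>set ts. {p. vert_count s p \<noteq> 0})"
    by (auto simp: sum_list_eq_0_iff split: if_splits)
  then show ?case
    using TNode by (auto intro: finite_subset)
qed

lemma sum_vert_count:
  assumes "finite S" and "{p. vert_count t p \<noteq> 0} \<subseteq> S"
  shows "(\<Sum>p\<in>S. vert_count t p) = tsize t"
  using assms(2)
proof (induction t)
  case (TNode a ts)
  have "(a, map troot ts) \<in> S"
    using TNode.prems by auto
  moreover have "(\<Sum>p\<in>S. vert_count s p) = tsize s" if "s \<in> set ts" for s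
    using TNode vert_count_subtree_nonzero[OF that] by (intro TNode.IH[OF that]) blast
  ultimately show ?case
    using assms(1) by (simp add: sum.distrib sum_sum_list_swap cong: map_cong)
qed

lemma edge_count_eq_sum_vert_count:
  assumes "finite C" and "{c. vert_count t (a, c) \<noteq> 0} \<subseteq> C"
  shows "edge_count t (a, b) = (\<Sum>c\<in>C. count_list c b * vert_count t (a, c))"
  using assms(2)
proof (induction t)
  case (TNode a' ts)
  have root: "(\<Sum>c\<in>C. if (a, c) = (a', map troot ts) then count_list c b else 0) =
      (if a = a' then count_list (map troot ts) b else 0)"
    using TNode.prems assms(1) by (auto simp: sum.delta)
  have IH: "edge_count s (a, b) = (\<Sum>c\<in>C. count_list c b * vert_count s (a, c))"
    if "s \<in> set ts" for s
    using TNode vert_count_subtree_nonzero[OF that] by (intro TNode.IH[OF that]) blast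
  have "(\<Sum>c\<in>C. count_list c b * vert_count (TNode a' ts) (a, c)) =
      (\<Sum>c\<in>C. if (a, c) = (a', map troot ts) then count_list c b else 0)
      + (\<Sum>c\<in>C. sum_list (map (\<lambda>s. count_list c b * vert_count s (a, c)) ts))"
    by (simp add: sum.distrib distrib_left sum_list_const_mult[symmetric] o_def) (rule sum.cong; simp)
  also have "\<dots> = edge_count (TNode a' ts) (a, b)"
    by (simp only: root edge_count.simps fst_conv snd_conv sum_sum_list_swap IH cong: map_cong)
  finally show ?case ..
qed

lemma emp_pair_in_M_s:
  fixes t :: "'a::finite ttree"
  shows "emp_pair t \<in> M_s"
proof -
  define V where "V = {p. vert_count t p \<noteq> 0}"
  define \<omega> where "\<omega> = (\<lambda>p. real (edge_count t p) / real (tsize t))"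
  define \<nu> where "\<nu> = (\<lambda>p. real (vert_count t p) / real (tsize t))"
  have V: "finite V"
    unfolding V_def by (rule finite_vert_count_support)
  have "tsize t > 0"
    by (cases t) simp
  then have "sum \<nu> V = 1"
    using sum_vert_count[OF V, of t] by (simp add: \<nu>_def V_def flip: sum_divide_distrib of_nat_sum)
  then have "(\<nu> has_sum 1) UNIV"
    using infsum_finite_support[OF V, of \<nu>] by (simp add: V_def \<nu>_def)
  moreover have "(\<lambda>p. real (length (snd p)) * \<nu> p) summable_on UNIV"
    by (rule has_sum_imp_summable, rule infsum_finite_support[OF V]) (simp add: V_def \<nu>_def)
  ultimately have "\<nu> \<in> prob_meas_fm"
    by (auto simp: prob_meas_fm_def prob_meas_def fin_meas_def \<nu>_def infsumI
        intro: has_sum_imp_summable)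
  moreover have "\<omega> \<in> fin_meas"
    unfolding fin_meas_def \<omega>_def by (auto intro: summable_on_finite)
  moreover have "sub_consistent \<omega> \<nu>"
    unfolding sub_consistent_def
  proof (intro allI)
    fix a b
    define C where "C = snd ` V"
    have C: "finite C" and support: "{c. vert_count t (a, c) \<noteq> 0} \<subseteq> C"
      using V by (force simp: C_def V_def)+
    have "((\<lambda>c. real (count_list c b) * \<nu> (a, c)) has_sum
        (\<Sum>c\<in>C. real (count_list c b) * \<nu> (a, c))) UNIV"
      using support by (intro infsum_finite_support[OF C]) (auto simp: \<nu>_def)
    moreover have "(\<Sum>c\<in>C. real (count_list c b) * \<nu> (a, c)) = \<omega> (a, b)"
      using edge_count_eq_sum_vert_count[OF C support, of b]
      by (simp add: \<omega>_def \<nu>_def sum_divide_distrib)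
    ultimately show "\<omega> (a, b) \<ge> (\<Sum>\<^sub>\<infinity>c. real (count_list c b) * \<nu> (a, c))"
      by (simp add: infsumI)
  qed
  ultimately show ?thesis
    by (simp add: M_s_def topspace_space_top emp_pair_def \<omega>_def \<nu>_def)
qed

lemma fin_meas_mix:
  assumes "m1 \<in> fin_meas" and "m2 \<in> fin_meas" and "0 \<le> t" and "t \<le> 1"
  shows "(\<lambda>x. t * m1 x + (1 - t) * m2 x) \<in> fin_meas"
  using assms unfolding fin_meas_def by (auto intro!: summable_on_add summable_on_cmult_right)

lemma prob_meas_fm_mix:
  assumes "\<nu>1 \<in> prob_meas_fm" and "\<nu>2 \<in> prob_meas_fm" and "0 \<le> t" and "t \<le> 1"
  shows "(\<lambda>x. t * \<nu>1 x + (1 - t) * \<nu>2 x) \<in> prob_meas_fm"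
proof -
  have "(\<lambda>x. t * \<nu>1 x + (1 - t) * \<nu>2 x) \<in> fin_meas"
    using assms by (intro fin_meas_mix) (auto simp: prob_meas_fm_def prob_meas_def)
  moreover have "(\<Sum>\<^sub>\<infinity>x. t * \<nu>1 x + (1 - t) * \<nu>2 x) = 1"
    using assms
    by (auto simp: prob_meas_fm_def prob_meas_def fin_meas_def infsum_add infsum_cmult_right
        summable_on_cmult_right)
  moreover have "(\<lambda>p. t * (real (length (snd p)) * \<nu>1 p) + (1 - t) * (real (length (snd p)) * \<nu>2 p))
      summable_on UNIV"
    using assms by (auto simp: prob_meas_fm_def intro!: summable_on_add summable_on_cmult_right)
  ultimately show ?thesis
    by (simp add: prob_meas_fm_def prob_meas_def algebra_simps)
qed

lemma summable_on_count_list: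
  assumes "\<nu> \<in> prob_meas_fm"
  shows "(\<lambda>c. real (count_list c b) * \<nu> (a, c)) summable_on UNIV"
proof -
  have "(\<lambda>p. real (length (snd p)) * \<nu> p) summable_on range (Pair a)"
    using assms by (auto simp: prob_meas_fm_def intro: summable_on_subset)
  then have "(\<lambda>c. real (length c) * \<nu> (a, c)) summable_on UNIV"
    by (subst (asm) summable_on_reindex) (auto simp: inj_on_def o_def)
  then show ?thesis
    by (rule summable_on_comparison_test) (use assms in \<open>auto intro!: mult_right_mono
        simp: count_le_length prob_meas_fm_def prob_meas_def fin_meas_def\<close>)
qed

lemma sub_consistent_mix:
  assumes "sub_consistent \<omega>1 \<nu>1" and "sub_consistent \<omega>2 \<nu>2"
    and "\<nu>1 \<in> prob_meas_fm" and "\<nu>2 \<in> prob_meas_fm" and "0 \<le> t" and "t \<le> 1"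
  shows "sub_consistent (\<lambda>x. t * \<omega>1 x + (1 - t) * \<omega>2 x) (\<lambda>x. t * \<nu>1 x + (1 - t) * \<nu>2 x)"
  unfolding sub_consistent_def
proof (intro allI)
  fix a b
  have "(\<Sum>\<^sub>\<infinity>c. real (count_list c b) * (t * \<nu>1 (a, c) + (1 - t) * \<nu>2 (a, c))) =
      (\<Sum>\<^sub>\<infinity>c. t * (real (count_list c b) * \<nu>1 (a, c)) + (1 - t) * (real (count_list c b) * \<nu>2 (a, c)))"
    by (simp add: algebra_simps)
  also have "\<dots> = t * (\<Sum>\<^sub>\<infinity>c. real (count_list c b) * \<nu>1 (a, c))
      + (1 - t) * (\<Sum>\<^sub>\<infinity>c. real (count_list c b) * \<nu>2 (a, c))"
    using summable_on_count_list[OF assms(3)] summable_on_count_list[OF assms(4)]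
    by (simp add: infsum_add summable_on_cmult_right infsum_cmult_right)
  also have "\<dots> \<le> t * \<omega>1 (a, b) + (1 - t) * \<omega>2 (a, b)"
    using assms unfolding sub_consistent_def by (intro add_mono mult_left_mono) auto
  finally show "t * \<omega>1 (a, b) + (1 - t) * \<omega>2 (a, b) \<ge>
      (\<Sum>\<^sub>\<infinity>c. real (count_list c b) * (t * \<nu>1 (a, c) + (1 - t) * \<nu>2 (a, c)))" .
qed

lemma comb_in_M_s:
  assumes "p \<in> M_s" and "q \<in> M_s" and "0 \<le> t" and "t \<le> 1"
  shows "comb t p q \<in> M_s"
  using assms fin_meas_mix prob_meas_fm_mix sub_consistent_mix
  by (auto simp: M_s_def comb_def topspace_space_top)

lemma INF_extend_by_infinity:
  fixes I J :: "'x \<Rightarrow> ereal"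
  assumes "A \<subseteq> T" and "\<And>x. x \<in> T \<Longrightarrow> J x = (if x \<in> S then I x else \<infinity>)"
  shows "(INF x\<in>A. J x) = (INF x\<in>A \<inter> S. I x)"
proof -
  have "A = (A \<inter> S) \<union> (A - S)" by blast
  then have "(INF x\<in>A. J x) = inf (INF x\<in>A \<inter> S. J x) (INF x\<in>A - S. J x)"
    by (metis INF_union)
  also have "(INF x\<in>A \<inter> S. J x) = (INF x\<in>A \<inter> S. I x)"
    using assms by (intro INF_cong) auto
  also have "(INF x\<in>A - S. J x) = \<infinity>"
    using assms by (auto intro!: INF_eqI)
  finally show ?thesis by simp
qed

lemma good_rate_function_extend_by_infinity:
  assumes S: "S \<subseteq> topspace X" and H: "Hausdorff_space X"
    and J: "\<And>x. x \<in> topspace X \<Longrightarrow> J x = (if x \<in> S then I x else \<infinity>)"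
    and good: "good_rate_function (subtopology X S) I"
  shows "good_rate_function X J"
proof -
  have level: "{x \<in> topspace X. J x \<le> ereal c} =
      {x \<in> topspace (subtopology X S). I x \<le> ereal c}" for c
    using S J by (auto split: if_splits)
  have compact: "compactin X {x \<in> topspace X. J x \<le> ereal c}" for c
    using good unfolding good_rate_function_def level compactin_subtopology by blast
  moreover have "closedin X {x \<in> topspace X. J x \<le> ereal c}" for c
    using compactin_imp_closedin[OF H compact] .
  moreover have "\<forall>x\<in>topspace X. 0 \<le> J x"
    using good J S unfolding good_rate_function_def rate_function_def by auto
  ultimately show ?thesis
    unfolding good_rate_function_def rate_function_def by blast
qed

lemma LDP_extend_by_infinity:
  assumes S: "S \<subseteq> topspace X"
    and J: "\<And>x. x \<in> topspace X \<Longrightarrow> J x = (if x \<in> S then I x else \<infinity>)"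
    and rate: "rate_function X J"
    and LDP: "LDP (subtopology X S) P I"
    and concentrated: "\<And>n A. P n A = P n (A \<inter> S)"
  shows "LDP X P J"
  unfolding LDP_def
proof (intro conjI allI impI rate)
  fix F assume F: "closedin X F"
  then have "closedin (subtopology X S) (F \<inter> S)"
    unfolding closedin_subtopology by blast
  then have "limsup (\<lambda>n. ereal (1 / real n) * ln_e (P n (F \<inter> S))) \<le> - (INF x\<in>F \<inter> S. I x)"
    using LDP unfolding LDP_def by blast
  moreover have "(INF x\<in>F. J x) = (INF x\<in>F \<inter> S. I x)"
    using INF_extend_by_infinity[OF closedin_subset[OF F] J] by simp
  ultimately show "limsup (\<lambda>n. ereal (1 / real n) * ln_e (P n F)) \<le> - (INF x\<in>F. J x)"
    using concentrated by simp
next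
  fix G assume G: "openin X G"
  then have "openin (subtopology X S) (G \<inter> S)"
    unfolding openin_subtopology by blast
  then have "- (INF x\<in>G \<inter> S. I x) \<le> liminf (\<lambda>n. ereal (1 / real n) * ln_e (P n (G \<inter> S)))"
    using LDP unfolding LDP_def by blast
  moreover have "(INF x\<in>G. J x) = (INF x\<in>G \<inter> S. I x)"
    using INF_extend_by_infinity[OF openin_subset[OF G] J] by simp
  ultimately show "- (INF x\<in>G. J x) \<le> liminf (\<lambda>n. ereal (1 / real n) * ln_e (P n G))"
    using concentrated by simp
qed

lemma convex_rate_extend_by_infinity:
  assumes C: "C \<subseteq> T"
    and comb_closed: "\<And>p q t. p \<in> C \<Longrightarrow> q \<in> C \<Longrightarrow> 0 < t \<Longrightarrow> t < 1 \<Longrightarrow> comb t p q \<in> C"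
    and J: "\<And>x. x \<in> T \<Longrightarrow> J x = (if x \<in> C then I x else \<infinity>)"
    and nonneg: "\<And>x. 0 \<le> J x"
    and convex: "convex_rate C I"
  shows "convex_rate T J"
  unfolding convex_rate_def
proof (intro ballI allI impI)
  fix p q and t :: real assume p: "p \<in> T" and q: "q \<in> T" and t: "0 < t \<and> t < 1"
  show "J (comb t p q) \<le> ereal t * J p + ereal (1 - t) * J q"
  proof (cases "p \<in> C \<and> q \<in> C")
    case True
    then have "comb t p q \<in> C" using comb_closed t by blast
    then show ?thesis
      using convex True t C J[OF p] J[OF q] J[of "comb t p q"]
      unfolding convex_rate_def by auto
  next
    case False
    then have "J p = \<infinity> \<or> J q = \<infinity>" using J p q by auto
    then have infinite: "ereal t * J p + ereal (1 - t) * J q = \<infinity>"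
      using t nonneg[of p] nonneg[of q] by (auto simp: ereal_mult_infty)
    show ?thesis unfolding infinite by simp
  qed
qed

theorem lemma3p2:
  fixes \<mu> :: "'a::finite \<Rightarrow> real" and Q :: "'a \<Rightarrow> 'a list \<Rightarrow> real"
  assumes mu_prob: "(\<forall>a. 0 \<le> \<mu> a) \<and> (\<Sum>a\<in>UNIV. \<mu> a) = 1"
    and Q_kernel: "\<And>a. (\<forall>c. 0 \<le> Q a c) \<and> Q a summable_on UNIV \<and> (\<Sum>\<^sub>\<infinity>c. Q a c) = 1"
    and hyp_LDP: "LDP (subtopology space_top M_s) (cond_prob \<mu> Q)
        (\<lambda>(\<omega>, \<nu>). if marg2 \<omega> = marg1 \<nu> then rel_entropy \<nu> (kernel_prod (marg1 \<nu>) Q) else \<infinity>)"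
    and hyp_good: "good_rate_function (subtopology space_top M_s)
        (\<lambda>(\<omega>, \<nu>). if marg2 \<omega> = marg1 \<nu> then rel_entropy \<nu> (kernel_prod (marg1 \<nu>) Q) else \<infinity>)"
    and hyp_convex: "convex_rate M_s
        (\<lambda>(\<omega>, \<nu>). if marg2 \<omega> = marg1 \<nu> then rel_entropy \<nu> (kernel_prod (marg1 \<nu>) Q) else \<infinity>)"
  shows "LDP space_top (cond_prob \<mu> Q)
           (\<lambda>(\<omega>, \<nu>). if sub_consistent \<omega> \<nu> \<and> marg2 \<omega> = marg1 \<nu>
              then rel_entropy \<nu> (kernel_prod (marg1 \<nu>) Q) else \<infinity>)
      \<and> good_rate_function space_top
           (\<lambda>(\<omega>, \<nu>). if sub_consistent \<omega> \<nu> \<and> marg2 \<omega> = marg1 \<nu>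
              then rel_entropy \<nu> (kernel_prod (marg1 \<nu>) Q) else \<infinity>)
      \<and> convex_rate (topspace space_top)
           (\<lambda>(\<omega>, \<nu>). if sub_consistent \<omega> \<nu> \<and> marg2 \<omega> = marg1 \<nu>
              then rel_entropy \<nu> (kernel_prod (marg1 \<nu>) Q) else \<infinity>)"
proof -
  define I where "I = (\<lambda>(\<omega>::'a \<times> 'a \<Rightarrow> real, \<nu>::'a \<times> 'a list \<Rightarrow> real).
      if marg2 \<omega> = marg1 \<nu> then rel_entropy \<nu> (kernel_prod (marg1 \<nu>) Q) else \<infinity>)"
  define J where "J = (\<lambda>(\<omega>::'a \<times> 'a \<Rightarrow> real, \<nu>::'a \<times> 'a list \<Rightarrow> real).
      if sub_consistent \<omega> \<nu> \<and> marg2 \<omega> = marg1 \<nu>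
        then rel_entropy \<nu> (kernel_prod (marg1 \<nu>) Q) else \<infinity>)"
  have M_s: "M_s \<subseteq> topspace space_top"
    by (auto simp: M_s_def)
  have J_eq: "J x = (if x \<in> M_s then I x else \<infinity>)" if "x \<in> topspace space_top" for x
    using that by (auto simp: J_def I_def M_s_def split: prod.splits)
  have concentrated: "cond_prob \<mu> Q n A = cond_prob \<mu> Q n (A \<inter> M_s)" for n A
    by (simp add: cond_prob_def emp_pair_in_M_s)
  have good: "good_rate_function space_top J"
    using hyp_good unfolding I_def[symmetric]
    by (intro good_rate_function_extend_by_infinity[OF M_s Hausdorff_space_space_top])
      (use J_eq in auto)
  moreover have "LDP space_top (cond_prob \<mu> Q) J"
    using good hyp_LDP concentrated unfolding I_def[symmetric] good_rate_function_def
    by (intro LDP_extend_by_infinity[OF M_s]) (use J_eq in auto)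
  moreover have "convex_rate (topspace space_top) J"
    using hyp_convex unfolding I_def[symmetric]
    by (intro convex_rate_extend_by_infinity[OF M_s])
      (use J_eq in \<open>auto simp: J_def rel_entropy_def intro: comb_in_M_s\<close>)
  ultimately show ?thesis
    unfolding J_def by blast
qed

end
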